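(* Let $T$ be a tree of diameter $d$ on $n$ vertices with maximum Wiener index. Let $x$ be a special vertex of $T$ and let $T_1,T_2$ be components of $T-x$ such that each of them contains exactly one broom vertex of $T$ and $d(y,y')<d$ for all leaves $y\in V(T_1)$, $y'\in V(T_2)$. Let $y_1\in V(T_1)$, $y_2\in V(T_2)$ be leaves of $T$, $y_1'$ the broom vertex adjacent to $y_1$, $p=d(x,y_1)=d(x,y_2)$, and $t_i$ the number of leaves of $T$ in $T_i$ ($i\in\{1,2\}$). Let $T'=T_2\xrightarrow{T} y_1'$. If $n\geq 1636$, $p\leq 4\sqrt{\frac{n-1}{2}}-3$ and $W(T)\geq W(T')$, then $$t_1\geq \left\lceil\sqrt{\frac{n-1}{2}}\right\rceil-1 \text{ if } t_1=t_2, \qquad t_1\geq \left\lceil\sqrt{\frac{n-\frac12}{2}}-\frac12\right\rceil \text{ if } t_1=t_2+1.$$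
   Context: All graphs are finite and simple; $d(u,v)$ denotes distance and $W(G)=\sum_{\{u,v\}\subseteq V(G)} d(u,v)$ is the Wiener index. A tree $T$ of order $n$ and diameter $d$ has maximum Wiener index if $W(T')\leq W(T)$ for every tree $T'$ of order $n$ and diameter $d$. A leaf is a vertex of degree $1$; a broom vertex of $T$ is a vertex adjacent to a leaf of $T$. A vertex $x$ of a tree $T$ of diameter $d$ is special if $\deg(x)\geq 3$ and there exist components $T_1,T_2$ of $T-x$ such that each contains exactly one broom vertex of $T$ and $d(y,y')<d$ for all leaves $y\in V(T_1)$, $y'\in V(T_2)$. For such $x,T_1,T_2$ and the broom vertex $y_1'$ of $T_1$, the tree $T_2\xrightarrow{T} y_1'$ is obtained from $T$ by deleting all vertices of $T_2$ and attaching $|V(T_2)|$ new leaves to $y_1'$. *)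

theory Defs
  imports Complex_Main
begin

definition sgraph :: "'a set \<Rightarrow> 'a set set \<Rightarrow> bool" where
  "sgraph V E \<longleftrightarrow> finite V \<and> (\<forall>e\<in>E. \<exists>u v. e = {u, v} \<and> u \<noteq> v \<and> u \<in> V \<and> v \<in> V)"

definition walk :: "'a set \<Rightarrow> 'a set set \<Rightarrow> 'a list \<Rightarrow> bool" where
  "walk V E xs \<longleftrightarrow> xs \<noteq> [] \<and> set xs \<subseteq> V \<and>
     (\<forall>i. Suc i < length xs \<longrightarrow> {xs ! i, xs ! Suc i} \<in> E)"

definition connected_graph :: "'a set \<Rightarrow> 'a set set \<Rightarrow> bool" where
  "connected_graph V E \<longleftrightarrow>
     (\<forall>u\<in>V. \<forall>v\<in>V. \<exists>xs. walk V E xs \<and> hd xs = u \<and> last xs = v)"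

definition is_tree :: "'a set \<Rightarrow> 'a set set \<Rightarrow> bool" where
  "is_tree V E \<longleftrightarrow> sgraph V E \<and> V \<noteq> {} \<and> connected_graph V E \<and> card E = card V - 1"

definition gdist :: "'a set \<Rightarrow> 'a set set \<Rightarrow> 'a \<Rightarrow> 'a \<Rightarrow> nat" where
  "gdist V E u v = (LEAST k. \<exists>xs. walk V E xs \<and> hd xs = u \<and> last xs = v \<and> length xs = Suc k)"

definition wiener :: "'a set \<Rightarrow> 'a set set \<Rightarrow> nat" where
  "wiener V E = (\<Sum>u\<in>V. \<Sum>v\<in>V. gdist V E u v) div 2"

definition diameter :: "'a set \<Rightarrow> 'a set set \<Rightarrow> nat" where
  "diameter V E = Max {gdist V E u v | u v. u \<in> V \<and> v \<in> V}"

definition degree :: "'a set \<Rightarrow> 'a set set \<Rightarrow> 'a \<Rightarrow> nat" where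
  "degree V E v = card {u \<in> V. {u, v} \<in> E}"

definition leaf :: "'a set \<Rightarrow> 'a set set \<Rightarrow> 'a \<Rightarrow> bool" where
  "leaf V E v \<longleftrightarrow> v \<in> V \<and> degree V E v = 1"

definition broom_vertex :: "'a set \<Rightarrow> 'a set set \<Rightarrow> 'a \<Rightarrow> bool" where
  "broom_vertex V E v \<longleftrightarrow> v \<in> V \<and> (\<exists>y. leaf V E y \<and> {v, y} \<in> E)"

text \<open>Maximum Wiener index among all trees of the same order and diameter
  (every finite tree is isomorphic to one on a set of naturals).\<close>
definition max_wiener_tree :: "'a set \<Rightarrow> 'a set set \<Rightarrow> bool" where
  "max_wiener_tree V E \<longleftrightarrow> is_tree V E \<and>
     (\<forall>(V'::nat set) E'. is_tree V' E' \<and> card V' = card V \<and> diameter V' E' = diameter V E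
        \<longrightarrow> wiener V' E' \<le> wiener V E)"

definition comp_minus :: "'a set \<Rightarrow> 'a set set \<Rightarrow> 'a \<Rightarrow> 'a \<Rightarrow> 'a set" where
  "comp_minus V E x w = {u. \<exists>xs. walk V E xs \<and> hd xs = w \<and> last xs = u \<and> x \<notin> set xs}"

definition components_minus :: "'a set \<Rightarrow> 'a set set \<Rightarrow> 'a \<Rightarrow> 'a set set" where
  "components_minus V E x = {comp_minus V E x w | w. w \<in> V - {x}}"

definition special_pair :: "'a set \<Rightarrow> 'a set set \<Rightarrow> 'a \<Rightarrow> 'a set \<Rightarrow> 'a set \<Rightarrow> bool" where
  "special_pair V E x T1 T2 \<longleftrightarrow>
     T1 \<in> components_minus V E x \<and> T2 \<in> components_minus V E x \<and> T1 \<noteq> T2 \<and>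
     card {v \<in> T1. broom_vertex V E v} = 1 \<and> card {v \<in> T2. broom_vertex V E v} = 1 \<and>
     (\<forall>y\<in>T1. \<forall>y'\<in>T2. leaf V E y \<longrightarrow> leaf V E y' \<longrightarrow> gdist V E y y' < diameter V E)"

definition special_vertex :: "'a set \<Rightarrow> 'a set set \<Rightarrow> 'a \<Rightarrow> bool" where
  "special_vertex V E x \<longleftrightarrow> x \<in> V \<and> degree V E x \<ge> 3 \<and>
     (\<exists>T1 T2. special_pair V E x T1 T2)"

text \<open>The tree T2 -> y1': delete T2 and attach |V(T2)| new leaves to y1'.
  Up to isomorphism we reuse the vertices of T2 as the new leaves.\<close>
definition move_edges :: "'a set set \<Rightarrow> 'a set \<Rightarrow> 'a \<Rightarrow> 'a set set" where
  "move_edges E T2 y = {e \<in> E. e \<inter> T2 = {}} \<union> {{y, v} | v. v \<in> T2}"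

end

theory Submission
  imports Defs
begin

text \<open>A branch \<open>T\<^sub>1\<close> at \<open>x\<close> containing a single broom vertex
  \<open>b\<^sub>1 = y\<^sub>1'\<close> is a path \<open>x, z\<^sub>1, \<dots>, z\<^bsub>p-1\<^esub> = b\<^sub>1\<close>
  with all its \<open>t\<^sub>1\<close> leaves attached to \<open>b\<^sub>1\<close>, and likewise for \<open>T\<^sub>2\<close>.
  Moving \<open>T\<^sub>2\<close> to \<open>b\<^sub>1\<close> shortens no distance outside \<open>T\<^sub>2\<close>;
  for \<open>u\<close> outside and \<open>v\<close> inside \<open>T\<^sub>2\<close> it replaces
  \<open>d(u,v) \<le> d(u,x) + d(x,v)\<close> by \<open>d(u,b\<^sub>1) + 1\<close>; and it puts any two
  vertices of \<open>T\<^sub>2\<close> at distance 2. Summing over the explicit shapes of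
  \<open>T\<^sub>1\<close> and \<open>T\<^sub>2\<close> gives, with \<open>q = p - 1\<close>,
  \<open>X = n - (2t\<^sub>1t\<^sub>2 + 2t\<^sub>1 + 2t\<^sub>2 + 3)\<close> and
  \<open>Y = t\<^sub>1t\<^sub>2 - t\<^sub>1 - t\<^sub>2\<close>,
  \<open>2(W(T) - W(T')) \<le> 4q\<^sup>2(q - 1) - q(q + 1)X - 2q(q - 1)Y\<close>.
  If \<open>X > 0\<close>, the bounds on \<open>p\<close> and \<open>n\<close> give \<open>X + 2Y \<ge> 4q\<close>, so the
  right-hand side is negative, contradicting \<open>W(T) \<ge> W(T')\<close>. Hence
  \<open>n \<le> 2t\<^sub>1t\<^sub>2 + 2t\<^sub>1 + 2t\<^sub>2 + 3\<close>, which is the claimed bound on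
  \<open>t\<^sub>1\<close> in both cases.\<close>

section \<open>Walks\<close>

lemma walk_iff_successively:
  "walk V E xs \<longleftrightarrow> xs \<noteq> [] \<and> set xs \<subseteq> V \<and> successively (\<lambda>a b. {a, b} \<in> E) xs"
  by (simp add: walk_def successively_conv_nth)

lemma walk_singleton [simp]: "walk V E [a] \<longleftrightarrow> a \<in> V"
  by (simp add: walk_iff_successively)

lemma walk_Cons_Cons [simp]:
  "walk V E (a # b # xs) \<longleftrightarrow> a \<in> V \<and> {a, b} \<in> E \<and> walk V E (b # xs)"
  by (auto simp: walk_iff_successively)

lemma walk_nth_edge: "walk V E xs \<Longrightarrow> Suc i < length xs \<Longrightarrow> {xs ! i, xs ! Suc i} \<in> E"
  unfolding walk_def by blast

lemma walk_append:
  assumes "walk V E xs" "walk V E ys" "{last xs, hd ys} \<in> E"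
  shows "walk V E (xs @ ys)"
  using assms by (auto simp: walk_iff_successively successively_append_iff)

lemma walk_snocD:
  assumes "walk V E (ys @ [b])" "ys \<noteq> []"
  shows "walk V E ys" "{last ys, b} \<in> E"
  using assms by (auto simp: walk_iff_successively successively_append_iff)

lemma walk_join:
  assumes "walk V E xs" "walk V E ys" "last xs = hd ys"
  shows "walk V E (xs @ tl ys)" "hd (xs @ tl ys) = hd xs" "last (xs @ tl ys) = last ys"
proof -
  have ne: "xs \<noteq> []" "ys \<noteq> []"
    using assms unfolding walk_def by auto
  show "walk V E (xs @ tl ys)"
  proof (cases "tl ys")
    case Nil
    then show ?thesis using assms(1) by simp
  next
    case (Cons c zs)
    then have "walk V E (hd ys # c # zs)"
      using ne(2) assms(2) by (metis list.collapse)
    then show ?thesis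
      using walk_append[OF assms(1), of "c # zs"] assms(3) Cons by simp
  qed
  show "hd (xs @ tl ys) = hd xs"
    using ne by simp
  show "last (xs @ tl ys) = last ys"
    using ne assms(3) by (cases ys) auto
qed

lemma walk_rev: "walk V E xs \<Longrightarrow> walk V E (rev xs)"
  by (auto simp: walk_iff_successively insert_commute)

lemma walk_take: "walk V E xs \<Longrightarrow> 0 < k \<Longrightarrow> walk V E (take k xs)"
  unfolding walk_def by (auto dest: in_set_takeD)

lemma walk_drop: "walk V E xs \<Longrightarrow> k < length xs \<Longrightarrow> walk V E (drop k xs)"
  unfolding walk_def by (auto dest: in_set_dropD)

lemma walk_subgraph:
  assumes "walk V E xs" "\<And>i. Suc i < length xs \<Longrightarrow> {xs ! i, xs ! Suc i} \<in> E'" "set xs \<subseteq> V'"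
  shows "walk V' E' xs"
  using assms unfolding walk_def by blast

lemma walk_delete_vertex:
  assumes "walk V E xs" "v \<notin> set xs"
  shows "walk (V - {v}) {e \<in> E. v \<notin> e} xs"
  using assms unfolding walk_def by (auto dest: nth_mem)

lemma edge_walk_if_bypass:
  assumes "{c, d} \<in> E" "c \<in> V" "d \<in> V"
    and "walk V (E - {{a, b}}) ws" "hd ws = a" "last ws = b"
  obtains zs where "walk V (E - {{a, b}}) zs" "hd zs = c" "last zs = d"
proof (cases "{c, d} = {a, b}")
  case True
  then consider "c = a" "d = b" | "c = b" "d = a"
    by (auto simp: doubleton_eq_iff)
  then show thesis
  proof cases
    case 1
    then show thesis using that assms(4-6) by blast
  next
    case 2
    then show thesis using that walk_rev[OF assms(4)] assms(5,6) by (auto simp: hd_rev last_rev)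
  qed
next
  case False
  then show thesis
    using that[of "[c, d]"] assms(1-3) by simp
qed

lemma walk_delete_edge_if_bypass:
  assumes "walk V E xs" "walk V (E - {{a, b}}) ws" "hd ws = a" "last ws = b"
  shows "\<exists>ys. walk V (E - {{a, b}}) ys \<and> hd ys = hd xs \<and> last ys = last xs"
  using assms(1)
proof (induction xs rule: rev_induct)
  case Nil
  then show ?case by (simp add: walk_def)
next
  case (snoc c xs)
  show ?case
  proof (cases "xs = []")
    case True
    then show ?thesis using snoc.prems by (intro exI[of _ "[c]"]) simp
  next
    case False
    note w = walk_snocD[OF snoc.prems False]
    obtain ys where ys: "walk V (E - {{a, b}}) ys" "hd ys = hd xs" "last ys = last xs"
      using snoc.IH[OF w(1)] by blast
    have "last xs \<in> V" "c \<in> V"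
      using w(1) snoc.prems False unfolding walk_def by auto
    then obtain zs where zs: "walk V (E - {{a, b}}) zs" "hd zs = last xs" "last zs = c"
      using edge_walk_if_bypass[OF w(2) _ _ assms(2-4)] by blast
    show ?thesis
      using walk_join[OF ys(1) zs(1)] ys zs False by (intro exI[of _ "ys @ tl zs"]) simp
  qed
qed

lemma connected_graphI_root:
  assumes "r \<in> V" "\<And>v. v \<in> V \<Longrightarrow> \<exists>xs. walk V E xs \<and> hd xs = r \<and> last xs = v"
  shows "connected_graph V E"
  unfolding connected_graph_def
proof (intro ballI)
  fix u v
  assume "u \<in> V" "v \<in> V"
  obtain xs where xs: "walk V E xs" "hd xs = r" "last xs = u"
    using assms \<open>u \<in> V\<close> by blast
  obtain ys where ys: "walk V E ys" "hd ys = r" "last ys = v"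
    using assms \<open>v \<in> V\<close> by blast
  have "walk V E (rev xs)" "hd (rev xs) = u" "last (rev xs) = r"
    using xs walk_rev[OF xs(1)] by (auto simp: hd_rev last_rev)
  then show "\<exists>xs. walk V E xs \<and> hd xs = u \<and> last xs = v"
    using walk_join[of V E "rev xs" ys] ys by metis
qed

lemma sgraph_edge_ends:
  assumes "sgraph V E" "{a, b} \<in> E"
  shows "a \<in> V \<and> b \<in> V \<and> a \<noteq> b"
proof -
  obtain u v where "{a, b} = {u, v}" "u \<noteq> v" "u \<in> V" "v \<in> V"
    using assms unfolding sgraph_def by blast
  then show ?thesis
    by (auto simp: doubleton_eq_iff)
qed

lemma sgraph_finite_edges:
  assumes "sgraph V E"
  shows "finite E"
proof -
  have "E \<subseteq> Pow V"
  proof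
    fix e
    assume "e \<in> E"
    then obtain u v where "e = {u, v}" "u \<in> V" "v \<in> V"
      using assms unfolding sgraph_def by blast
    then show "e \<in> Pow V"
      by auto
  qed
  moreover have "finite V"
    using assms unfolding sgraph_def by blast
  ultimately show ?thesis
    by (meson finite_Pow_iff finite_subset)
qed

lemma sgraph_delete_vertex: "sgraph V E \<Longrightarrow> sgraph (V - {v}) {e \<in> E. v \<notin> e}"
  unfolding sgraph_def by blast

section \<open>Distances in connected graphs\<close>

locale connected_sgraph =
  fixes V :: "'a set" and E :: "'a set set"
  assumes sgraph: "sgraph V E" and connected: "connected_graph V E"
begin

abbreviation "D \<equiv> gdist V E"

lemma finite_V: "finite V"
  using sgraph unfolding sgraph_def by blast

lemma finite_E: "finite E"
  using sgraph_finite_edges[OF sgraph] .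

lemma edge_ends: "{a, b} \<in> E \<Longrightarrow> a \<in> V \<and> b \<in> V \<and> a \<noteq> b"
  using sgraph_edge_ends[OF sgraph] .

lemma shortest_walk_exists:
  assumes "u \<in> V" "v \<in> V"
  shows "\<exists>xs. walk V E xs \<and> hd xs = u \<and> last xs = v \<and> length xs = Suc (D u v)"
proof -
  obtain xs where "walk V E xs" "hd xs = u" "last xs = v"
    using connected assms unfolding connected_graph_def by blast
  then have "\<exists>k xs. walk V E xs \<and> hd xs = u \<and> last xs = v \<and> length xs = Suc k"
    by (metis Suc_pred length_greater_0_conv walk_def)
  then show ?thesis
    unfolding gdist_def by (rule LeastI_ex)
qed

lemma gdist_le_walk:
  assumes "walk V E xs" "hd xs = u" "last xs = v"
  shows "D u v \<le> length xs - 1"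
proof -
  have "length xs = Suc (length xs - 1)"
    using assms(1) unfolding walk_def by simp
  then show ?thesis
    unfolding gdist_def using assms by (intro Least_le) metis
qed

lemma gdist_self [simp]: "u \<in> V \<Longrightarrow> D u u = 0"
  using gdist_le_walk[of "[u]" u u] by simp

lemma gdist_commute:
  assumes "u \<in> V" "v \<in> V"
  shows "D u v = D v u"
proof -
  have "D a b \<le> D b a" if ab: "a \<in> V" "b \<in> V" for a b
  proof -
    obtain xs where "walk V E xs" "hd xs = b" "last xs = a" "length xs = Suc (D b a)"
      using shortest_walk_exists ab by blast
    then show ?thesis
      using gdist_le_walk[of "rev xs" a b] walk_rev[of V E xs] by (simp add: hd_rev last_rev)
  qed
  then show ?thesis
    using assms by (simp add: le_antisym)
qed

lemma gdist_triangle: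
  assumes "u \<in> V" "v \<in> V" "w \<in> V"
  shows "D u w \<le> D u v + D v w"
proof -
  obtain xs where xs: "walk V E xs" "hd xs = u" "last xs = v" "length xs = Suc (D u v)"
    using shortest_walk_exists assms by blast
  obtain ys where ys: "walk V E ys" "hd ys = v" "last ys = w" "length ys = Suc (D v w)"
    using shortest_walk_exists assms by blast
  have "last xs = hd ys"
    using xs ys by simp
  note joined = walk_join[OF xs(1) ys(1) this]
  have "D u w \<le> length (xs @ tl ys) - 1"
    using gdist_le_walk[OF joined(1)] joined(2,3) xs(2) ys(3) by simp
  then show ?thesis
    using xs ys by simp
qed

lemma gdist_edge_le_1: "{u, v} \<in> E \<Longrightarrow> D u v \<le> 1"
  using gdist_le_walk[of "[u, v]" u v] edge_ends by simp

lemma gdist_eq_0D: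
  assumes "u \<in> V" "v \<in> V" "D u v = 0"
  shows "u = v"
proof -
  obtain xs where "walk V E xs" "hd xs = u" "last xs = v" "length xs = Suc (D u v)"
    using shortest_walk_exists assms by blast
  then show ?thesis
    using assms(3) by (cases xs) auto
qed

lemma gdist_eq_1D:
  assumes "u \<in> V" "v \<in> V" "D u v = 1"
  shows "{u, v} \<in> E"
proof -
  obtain xs where xs: "walk V E xs" "hd xs = u" "last xs = v" "length xs = Suc (D u v)"
    using shortest_walk_exists assms by blast
  then obtain a b where "xs = [a, b]"
    using assms(3)
    by (cases xs; cases "tl xs") auto
  then show ?thesis
    using xs by auto
qed

lemma gdist_ge_2:
  assumes "u \<in> V" "v \<in> V" "u \<noteq> v" "{u, v} \<notin> E"
  shows "2 \<le> D u v"
  using gdist_eq_0D[of u v] gdist_eq_1D[of u v] assms by linarith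

lemma gdist_le_walk_prefix:
  assumes "walk V E xs" "hd xs = u" "i < length xs"
  shows "D u (xs ! i) \<le> i"
proof -
  have "walk V E (take (Suc i) xs)"
    using walk_take assms by blast
  moreover have "hd (take (Suc i) xs) = u"
    using assms by (simp add: walk_def hd_take)
  moreover have "last (take (Suc i) xs) = xs ! i"
    using assms by (simp add: take_Suc_conv_app_nth)
  ultimately show ?thesis
    using gdist_le_walk[of "take (Suc i) xs"] assms by simp
qed

lemma gdist_le_walk_suffix:
  assumes "walk V E xs" "last xs = v" "i < length xs"
  shows "D (xs ! i) v \<le> length xs - 1 - i"
  using gdist_le_walk[of "drop i xs"] walk_drop[OF assms(1)] assms
  by (simp add: hd_drop_conv_nth)

lemma gdist_edge_step:
  assumes "{a, b} \<in> E" "u \<in> V"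
  shows "D u b \<le> D u a + 1"
  using gdist_triangle[of u a b] gdist_edge_le_1[OF assms(1)] edge_ends[OF assms(1)] assms(2)
  by simp

lemma potential_le_gdist:
  fixes \<phi> :: "'a \<Rightarrow> int"
  assumes step: "\<And>a b. {a, b} \<in> E \<Longrightarrow> \<phi> b \<le> \<phi> a + 1" and "u \<in> V" "v \<in> V"
  shows "\<phi> v - \<phi> u \<le> int (D u v)"
proof -
  have walk_bound: "\<phi> (last xs) \<le> \<phi> (hd xs) + int (length xs - 1)" if "walk V E xs" for xs
    using that
  proof (induction xs rule: induct_list012)
    case (3 a b zs)
    then show ?case using step[of a b] by simp
  qed (simp_all add: walk_def)
  obtain xs where "walk V E xs" "hd xs = u" "last xs = v" "length xs = Suc (D u v)"
    using shortest_walk_exists assms by blast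
  then show ?thesis
    using walk_bound by fastforce
qed

lemma parent_exists:
  assumes "v \<in> V" "v \<noteq> x" "x \<in> V"
  obtains u where "{u, v} \<in> E" "D x u + 1 = D x v"
proof -
  obtain xs where xs: "walk V E xs" "hd xs = x" "last xs = v" "length xs = Suc (D x v)"
    using shortest_walk_exists assms by blast
  obtain k where k: "D x v = Suc k"
    using gdist_eq_0D assms by (cases "D x v") auto
  have e: "{xs ! k, v} \<in> E"
    using walk_nth_edge[OF xs(1), of k] xs k by (simp add: last_conv_nth walk_def)
  have "D x (xs ! k) \<le> k"
    using gdist_le_walk_prefix[OF xs(1,2)] xs k by simp
  moreover have "D x v \<le> D x (xs ! k) + 1"
    using gdist_edge_step[OF e] assms by simp
  ultimately show thesis
    using that e k by simp
qed

lemma shortest_walk_avoids_farther: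
  assumes "r \<in> V" "w \<in> V" "w \<noteq> v" "D r w \<le> D r v"
  obtains xs where "walk V E xs" "hd xs = r" "last xs = w" "v \<notin> set xs"
proof -
  obtain xs where xs: "walk V E xs" "hd xs = r" "last xs = w" "length xs = Suc (D r w)"
    using shortest_walk_exists assms by blast
  have "v \<notin> set xs"
  proof
    assume "v \<in> set xs"
    then obtain i where i: "i < length xs" "xs ! i = v"
      by (auto simp: in_set_conv_nth)
    have "i \<noteq> length xs - 1"
    proof
      assume "i = length xs - 1"
      moreover have "xs \<noteq> []"
        using i(1) by auto
      ultimately have "xs ! i = last xs"
        by (simp add: last_conv_nth)
      then show False
        using i(2) xs(3) assms(3) by simp
    qed
    moreover have "D r v \<le> i"
      using gdist_le_walk_prefix[OF xs(1,2) i(1)] i(2) by simp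
    ultimately show False
      using i(1) xs(4) assms(4) by linarith
  qed
  then show thesis
    using that xs by blast
qed

lemma walk_avoiding_farther_vertex:
  assumes "x \<in> V" "u \<in> V" "u \<noteq> v" "D x u \<le> D x v" "u' \<in> V" "u' \<noteq> v" "D x u' \<le> D x v"
  obtains zs where "walk V E zs" "hd zs = u" "last zs = u'" "v \<notin> set zs"
proof -
  obtain xs where xs: "walk V E xs" "hd xs = x" "last xs = u" "v \<notin> set xs"
    by (rule shortest_walk_avoids_farther[OF assms(1-4)])
  obtain ys where ys: "walk V E ys" "hd ys = x" "last ys = u'" "v \<notin> set ys"
    by (rule shortest_walk_avoids_farther[OF assms(1,5-7)])
  have rev: "walk V E (rev xs)" "hd (rev xs) = u" "last (rev xs) = x"
    using xs walk_rev[OF xs(1)] by (auto simp: hd_rev last_rev)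
  have "v \<notin> set (rev xs @ tl ys)"
    using xs(4) ys(4) by (cases ys) auto
  then show thesis
    using that walk_join[OF rev(1) ys(1)] rev ys by simp
qed

lemma exists_edge_at:
  assumes "v \<in> V" "V \<noteq> {v}"
  obtains u where "{u, v} \<in> E"
proof -
  obtain x where x: "x \<in> V" "x \<noteq> v"
    using assms by auto
  obtain u where "{u, v} \<in> E"
    using parent_exists[OF assms(1) not_sym[OF x(2)] x(1)] by blast
  then show thesis
    by (rule that)
qed

lemma farthest_vertexE:
  assumes "r \<in> V" "V \<noteq> {r}"
  obtains v where "v \<in> V" "v \<noteq> r" "\<forall>w\<in>V. D r w \<le> D r v"
proof -
  have "Max (D r ` V) \<in> D r ` V"
    using finite_V assms(1) by (intro Max_in) auto
  then obtain v where v: "v \<in> V" "D r v = Max (D r ` V)"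
    by (metis imageE)
  have farthest: "D r w \<le> D r v" if "w \<in> V" for w
    using that finite_V unfolding v(2) by simp
  obtain a where "a \<in> V" "a \<noteq> r"
    using assms by auto
  then have "0 < D r a"
    using gdist_eq_0D assms(1) by fastforce
  then have "v \<noteq> r"
    using farthest[OF \<open>a \<in> V\<close>] assms(1) by auto
  then show thesis
    using that v(1) farthest by blast
qed

lemma delete_farthest_vertex:
  assumes "r \<in> V" "v \<in> V" "v \<noteq> r" "\<forall>w\<in>V. D r w \<le> D r v"
  shows "connected_graph (V - {v}) {e \<in> E. v \<notin> e}" "card {e \<in> E. v \<notin> e} < card E"
proof -
  show "connected_graph (V - {v}) {e \<in> E. v \<notin> e}"
  proof (rule connected_graphI_root)
    show "r \<in> V - {v}"
      using assms(1,3) by blast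
    fix w
    assume "w \<in> V - {v}"
    then have w: "w \<in> V" "w \<noteq> v"
      by auto
    obtain xs where xs: "walk V E xs" "hd xs = r" "last xs = w" "v \<notin> set xs"
      using shortest_walk_avoids_farther[OF assms(1) w] assms(4) w(1) by blast
    then show "\<exists>xs. walk (V - {v}) {e \<in> E. v \<notin> e} xs \<and> hd xs = r \<and> last xs = w"
      using walk_delete_vertex[OF xs(1,4)] by blast
  qed
  have "V \<noteq> {v}"
    using assms(1,3) by auto
  then obtain u where "{u, v} \<in> E"
    by (rule exists_edge_at[OF assms(2)])
  then have "{e \<in> E. v \<notin> e} \<subset> E"
    by auto
  then show "card {e \<in> E. v \<notin> e} < card E"
    by (rule psubset_card_mono[OF finite_E])
qed

definition reach_avoiding :: "'a \<Rightarrow> 'a \<Rightarrow> 'a \<Rightarrow> bool" where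
  "reach_avoiding x u v \<longleftrightarrow> (\<exists>xs. walk V E xs \<and> hd xs = u \<and> last xs = v \<and> x \<notin> set xs)"

lemma comp_minus_eq: "comp_minus V E x w = {u. reach_avoiding x w u}"
  unfolding comp_minus_def reach_avoiding_def by simp

lemma reach_avoiding_in_V: "reach_avoiding x u v \<Longrightarrow> u \<in> V - {x} \<and> v \<in> V - {x}"
  unfolding reach_avoiding_def walk_def by (auto intro: hd_in_set last_in_set)

lemma reach_avoiding_sym:
  assumes "reach_avoiding x u v"
  shows "reach_avoiding x v u"
proof -
  obtain xs where xs: "walk V E xs" "hd xs = u" "last xs = v" "x \<notin> set xs"
    using assms unfolding reach_avoiding_def by blast
  then show ?thesis
    unfolding reach_avoiding_def using walk_rev[OF xs(1)]
    by (intro exI[of _ "rev xs"]) (auto simp: hd_rev last_rev)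
qed

lemma reach_avoiding_trans:
  assumes "reach_avoiding x u v" "reach_avoiding x v w"
  shows "reach_avoiding x u w"
proof -
  obtain xs where xs: "walk V E xs" "hd xs = u" "last xs = v" "x \<notin> set xs"
    using assms(1) unfolding reach_avoiding_def by blast
  obtain ys where ys: "walk V E ys" "hd ys = v" "last ys = w" "x \<notin> set ys"
    using assms(2) unfolding reach_avoiding_def by blast
  have "x \<notin> set (xs @ tl ys)"
    using xs(4) ys(4) by (cases ys) auto
  then show ?thesis
    unfolding reach_avoiding_def using walk_join[OF xs(1) ys(1)] xs ys
    by (intro exI[of _ "xs @ tl ys"]) simp
qed

lemma reach_avoiding_edge: "{u, v} \<in> E \<Longrightarrow> u \<noteq> x \<Longrightarrow> v \<noteq> x \<Longrightarrow> reach_avoiding x u v"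
  unfolding reach_avoiding_def using edge_ends[of u v] by (intro exI[of _ "[u, v]"]) simp

lemma component_subset: "C \<in> components_minus V E x \<Longrightarrow> C \<subseteq> V - {x}"
  unfolding components_minus_def comp_minus_eq using reach_avoiding_in_V by blast

lemma component_reach_avoiding:
  "C \<in> components_minus V E x \<Longrightarrow> u \<in> C \<Longrightarrow> v \<in> C \<Longrightarrow> reach_avoiding x u v"
  unfolding components_minus_def comp_minus_eq
  using reach_avoiding_sym reach_avoiding_trans by blast

lemma component_closed:
  "C \<in> components_minus V E x \<Longrightarrow> u \<in> C \<Longrightarrow> reach_avoiding x u v \<Longrightarrow> v \<in> C"
  unfolding components_minus_def comp_minus_eq using reach_avoiding_trans by blast

lemma component_edge_closed:
  "C \<in> components_minus V E x \<Longrightarrow> u \<in> C \<Longrightarrow> {u, v} \<in> E \<Longrightarrow> v \<noteq> x \<Longrightarrow> v \<in> C"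
  using component_closed component_subset reach_avoiding_edge by blast

lemma components_disjoint:
  assumes "C \<in> components_minus V E x" "C' \<in> components_minus V E x" "C \<noteq> C'"
  shows "C \<inter> C' = {}"
proof (rule ccontr)
  assume "C \<inter> C' \<noteq> {}"
  then obtain z where "z \<in> C" "z \<in> C'"
    by blast
  then have "C \<subseteq> C'" "C' \<subseteq> C"
    using assms(1,2) component_reach_avoiding component_closed by blast+
  then show False
    using assms(3) by blast
qed

lemma component_dist_through_cut:
  assumes "C \<in> components_minus V E x" "u \<in> C" "v \<in> V - C" "x \<in> V"
  shows "D u x + D x v \<le> D u v"
proof -
  have "u \<in> V"
    using component_subset assms(1,2) by blast
  then obtain xs where xs: "walk V E xs" "hd xs = u" "last xs = v" "length xs = Suc (D u v)"
    using shortest_walk_exists assms(3) by blast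
  have "x \<in> set xs"
  proof (rule ccontr)
    assume "x \<notin> set xs"
    then have "reach_avoiding x u v"
      unfolding reach_avoiding_def using xs by blast
    then show False
      using component_closed assms by blast
  qed
  then obtain i where i: "i < length xs" "xs ! i = x"
    by (auto simp: in_set_conv_nth)
  have "D u x \<le> i"
    using gdist_le_walk_prefix[OF xs(1,2) i(1)] i by simp
  moreover have "D x v \<le> length xs - 1 - i"
    using gdist_le_walk_suffix[OF xs(1,3) i(1)] i by simp
  ultimately show ?thesis
    using xs(4) i(1) by simp
qed

lemma leaf_neighbourE:
  assumes "leaf V E v"
  obtains c where "{u \<in> V. {u, v} \<in> E} = {c}"
  using assms unfolding leaf_def degree_def by (auto simp: card_1_singleton_iff)

lemma leaf_neighbour_unique:
  assumes "leaf V E v" "{a, v} \<in> E" "{c, v} \<in> E"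
  shows "a = c"
proof -
  obtain d where "{u \<in> V. {u, v} \<in> E} = {d}"
    using leaf_neighbourE[OF assms(1)] by blast
  moreover have "a \<in> {u \<in> V. {u, v} \<in> E}" "c \<in> {u \<in> V. {u, v} \<in> E}"
    using assms edge_ends by auto
  ultimately show ?thesis
    by auto
qed

lemma not_leaf_other_neighbourE:
  assumes "v \<in> V" "\<not> leaf V E v" "{a, v} \<in> E"
  obtains c where "{c, v} \<in> E" "c \<noteq> a"
proof -
  have "a \<in> {u \<in> V. {u, v} \<in> E}"
    using assms edge_ends by auto
  moreover have "card {u \<in> V. {u, v} \<in> E} \<noteq> 1"
    using assms unfolding leaf_def degree_def by simp
  ultimately have "{u \<in> V. {u, v} \<in> E} \<noteq> {a}"
    by auto
  then show thesis
    using that \<open>a \<in> {u \<in> V. {u, v} \<in> E}\<close> by blast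
qed

lemma walk_from_leaf_avoiding_neighbour:
  assumes "leaf V E l" "{c, l} \<in> E" "walk V E xs" "hd xs = l" "c \<notin> set xs"
  shows "xs = [l]"
proof (cases xs)
  case Nil
  then show ?thesis using assms(3) by (simp add: walk_def)
next
  case (Cons a ys)
  show ?thesis
  proof (cases ys)
    case Nil
    then show ?thesis using Cons assms(4) by simp
  next
    case (Cons b zs)
    then have "{b, l} \<in> E" "b \<in> set xs"
      using \<open>xs = a # ys\<close> assms(3,4) by (auto simp: insert_commute)
    then show ?thesis
      using leaf_neighbour_unique[OF assms(1,2)] assms(5) by blast
  qed
qed

end

section \<open>Trees\<close>

lemma card_vertices_le_Suc_card_edges:
  "sgraph V E \<Longrightarrow> connected_graph V E \<Longrightarrow> V \<noteq> {} \<Longrightarrow> card V \<le> Suc (card E)"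
proof (induction "card V" arbitrary: V E rule: less_induct)
  case less
  interpret connected_sgraph V E
    using less.prems by unfold_locales
  obtain r where r: "r \<in> V"
    using less.prems by blast
  show ?case
  proof (cases "V = {r}")
    case True
    then show ?thesis by simp
  next
    case False
    obtain v where v: "v \<in> V" "v \<noteq> r" "\<forall>w\<in>V. D r w \<le> D r v"
      by (rule farthest_vertexE[OF r False])
    note delete = delete_farthest_vertex[OF r v]
    have "card (V - {v}) < card V" "V - {v} \<noteq> {}"
      using card_Diff1_less[OF finite_V v(1)] r v(2) by auto
    then have "card (V - {v}) \<le> Suc (card {e \<in> E. v \<notin> e})"
      using less.hyps[OF _ sgraph_delete_vertex[OF sgraph] delete(1)] by blast
    then show ?thesis
      using delete(2) card_Suc_Diff1[OF finite_V v(1)] by simp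
  qed
qed

locale tree = connected_sgraph +
  assumes card_E: "card E = card V - 1"
begin

text \<open>Otherwise \<open>E - {{a, b}}\<close> would still connect \<open>V\<close> with only \<open>card V - 2\<close> edges.\<close>

lemma edge_no_bypass:
  assumes "{a, b} \<in> E" "walk V (E - {{a, b}}) ws" "hd ws = a" "last ws = b"
  shows False
proof -
  let ?E = "E - {{a, b}}"
  have "sgraph V ?E"
    using sgraph unfolding sgraph_def by blast
  moreover have "connected_graph V ?E"
    unfolding connected_graph_def
  proof (intro ballI)
    fix u v
    assume "u \<in> V" "v \<in> V"
    then obtain xs where "walk V E xs" "hd xs = u" "last xs = v"
      using connected unfolding connected_graph_def by blast
    then show "\<exists>xs. walk V ?E xs \<and> hd xs = u \<and> last xs = v"
      using walk_delete_edge_if_bypass[OF _ assms(2-4)] by metis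
  qed
  moreover have "V \<noteq> {}"
    using edge_ends[OF assms(1)] by auto
  ultimately have "card V \<le> Suc (card ?E)"
    by (rule card_vertices_le_Suc_card_edges)
  moreover have "card ?E = card E - 1"
    using assms(1) finite_E by simp
  moreover have "0 < card E"
    using assms(1) finite_E card_gt_0_iff by blast
  ultimately show False
    using card_E by linarith
qed

text \<open>Two parents of \<open>v\<close> are joined by a walk through \<open>x\<close> that avoids \<open>v\<close>; continuing
  it to \<open>v\<close> bypasses the edge \<open>{u, v}\<close>.\<close>

lemma parent_unique:
  assumes "x \<in> V" "{u, v} \<in> E" "{u', v} \<in> E" "D x u \<le> D x v" "D x u' \<le> D x v"
  shows "u = u'"
proof (rule ccontr)
  assume "u \<noteq> u'"
  have V: "u \<in> V" "u' \<in> V" "v \<in> V" "u \<noteq> v" "u' \<noteq> v"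
    using edge_ends assms(2,3) by auto
  obtain zs where zs: "walk V E zs" "hd zs = u" "last zs = u'" "v \<notin> set zs"
    by (rule walk_avoiding_farther_vertex[OF assms(1) V(1,4) assms(4) V(2,5) assms(5)])
  have "walk V (E - {{u, v}}) zs"
  proof (rule walk_subgraph[OF zs(1)])
    fix i
    assume i: "Suc i < length zs"
    then have "v \<notin> {zs ! i, zs ! Suc i}"
      using zs(4) by (auto dest: nth_mem)
    then show "{zs ! i, zs ! Suc i} \<in> E - {{u, v}}"
      using walk_nth_edge[OF zs(1) i] by auto
  next
    show "set zs \<subseteq> V"
      using zs(1) unfolding walk_def by blast
  qed
  moreover have "{last zs, hd [v]} \<in> E - {{u, v}}"
    using zs(3) assms(3) \<open>u \<noteq> u'\<close> V by (auto simp: doubleton_eq_iff)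
  ultimately have "walk V (E - {{u, v}}) (zs @ [v])"
    using walk_append[of V "E - {{u, v}}" zs "[v]"] V(3) by simp
  moreover have "hd (zs @ [v]) = u"
    using zs(1,2) by (simp add: walk_def)
  ultimately show False
    using edge_no_bypass[OF assms(2), of "zs @ [v]"] by simp
qed

end

section \<open>Branches with a single broom vertex\<close>

locale broom_branch = tree +
  fixes x C y b p
  assumes x_in_V: "x \<in> V" and x_not_leaf: "\<not> leaf V E x"
    and component: "C \<in> components_minus V E x"
    and one_broom: "card {v \<in> C. broom_vertex V E v} = 1"
    and y_in_C: "y \<in> C" and leaf_y: "leaf V E y" and edge_b_y: "{b, y} \<in> E"
    and p_def: "p = D x y"
begin

abbreviation "L \<equiv> {v \<in> C. leaf V E v}"

lemma C_subset: "C \<subseteq> V - {x}"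
  using component_subset[OF component] .

lemma finite_C: "finite C"
  using C_subset finite_V finite_subset by blast

lemma dist_x_b: "D x b + 1 = p"
proof -
  have y: "y \<in> V" "y \<noteq> x"
    using C_subset y_in_C by auto
  obtain u where u: "{u, y} \<in> E" "D x u + 1 = D x y"
    by (rule parent_exists[OF y x_in_V])
  have "u = b"
    using leaf_neighbour_unique[OF leaf_y u(1) edge_b_y] .
  then show ?thesis
    using u(2) p_def by simp
qed

lemma b_in_V: "b \<in> V"
  using edge_ends[OF edge_b_y] by simp

text \<open>If \<open>p = 1\<close>, then \<open>y\<close> would be the only vertex of \<open>C\<close>, hence its broom vertex,
  and its leaf neighbour would be \<open>x\<close>.\<close>

lemma p_ge_2: "2 \<le> p"
proof (rule ccontr)
  assume "\<not> 2 \<le> p"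
  then have "b = x"
    using dist_x_b gdist_eq_0D[OF x_in_V b_in_V] by simp
  obtain c where "{v \<in> C. broom_vertex V E v} = {c}"
    using one_broom by (auto simp: card_1_singleton_iff)
  then have c: "c \<in> C" "broom_vertex V E c"
    by auto
  obtain xs where xs: "walk V E xs" "hd xs = y" "last xs = c" "x \<notin> set xs"
    using component_reach_avoiding[OF component y_in_C c(1)] unfolding reach_avoiding_def by blast
  then have "xs = [y]"
    using walk_from_leaf_avoiding_neighbour[OF leaf_y edge_b_y] \<open>b = x\<close> by simp
  then have "c = y"
    using xs(3) by simp
  then obtain l where "leaf V E l" "{y, l} \<in> E"
    using c(2) unfolding broom_vertex_def by blast
  moreover have "l = x"
    using leaf_neighbour_unique[OF leaf_y edge_b_y, of l] calculation(2) \<open>b = x\<close>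
    by (simp add: insert_commute)
  ultimately show False
    using x_not_leaf by simp
qed

lemma b_ne_x: "b \<noteq> x"
  using dist_x_b p_ge_2 x_in_V by auto

lemma b_in_C: "b \<in> C"
  using component_edge_closed[OF component y_in_C _ b_ne_x] edge_b_y by (simp add: insert_commute)

lemma broom_vertices_eq: "{v \<in> C. broom_vertex V E v} = {b}"
proof -
  have "b \<in> {v \<in> C. broom_vertex V E v}"
    using b_in_C b_in_V leaf_y edge_b_y unfolding broom_vertex_def by blast
  moreover obtain c where "{v \<in> C. broom_vertex V E v} = {c}"
    using one_broom by (auto simp: card_1_singleton_iff)
  ultimately show ?thesis
    by auto
qed

definition spine_walk :: "'a list" where
  "spine_walk = (SOME xs. walk V E xs \<and> hd xs = x \<and> last xs = b \<and> length xs = Suc (D x b))"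

definition spine :: "nat \<Rightarrow> 'a" where
  "spine j = spine_walk ! j"

lemma spine_walk: "walk V E spine_walk" "hd spine_walk = x" "last spine_walk = b" "length spine_walk = p"
proof -
  have "walk V E spine_walk \<and> hd spine_walk = x \<and> last spine_walk = b \<and> length spine_walk = Suc (D x b)"
    unfolding spine_walk_def using shortest_walk_exists[OF x_in_V b_in_V] by (rule someI_ex)
  then show "walk V E spine_walk" "hd spine_walk = x" "last spine_walk = b" "length spine_walk = p"
    using dist_x_b by auto
qed

lemma spine_dist:
  assumes "j \<le> p - 1"
  shows "D x (spine j) = j" "D (spine j) b = p - 1 - j" "spine j \<in> V"
proof -
  have j: "j < length spine_walk"
    using assms spine_walk p_ge_2 by simp
  show "spine j \<in> V"
    using j spine_walk(1) unfolding spine_def walk_def by auto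
  moreover have "D x (spine j) \<le> j"
    using gdist_le_walk_prefix[OF spine_walk(1,2) j] unfolding spine_def .
  moreover have "D (spine j) b \<le> p - 1 - j"
    using gdist_le_walk_suffix[OF spine_walk(1,3) j] spine_walk(4) unfolding spine_def by simp
  moreover have "D x b \<le> D x (spine j) + D (spine j) b"
    using gdist_triangle x_in_V b_in_V calculation(1) by blast
  ultimately show "D x (spine j) = j" "D (spine j) b = p - 1 - j"
    using dist_x_b assms by auto
qed

lemma spine_last: "spine (p - 1) = b"
  using spine_walk p_ge_2 unfolding spine_def by (simp add: last_conv_nth walk_def)

lemma spine_edge: "j < p - 1 \<Longrightarrow> {spine j, spine (Suc j)} \<in> E"
  using walk_nth_edge[OF spine_walk(1), of j] spine_walk p_ge_2 unfolding spine_def by simp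

lemma inj_on_spine: "inj_on spine {1..p-1}"
  by (rule inj_on_inverseI[where g = "D x"]) (simp add: spine_dist(1))

lemma spine_in_C:
  assumes "1 \<le> j" "j \<le> p - 1"
  shows "spine j \<in> C"
proof -
  have j: "j < length spine_walk"
    using assms spine_walk p_ge_2 by simp
  have "x \<notin> set (drop j spine_walk)"
  proof
    assume "x \<in> set (drop j spine_walk)"
    then obtain k where "k < length (drop j spine_walk)" "drop j spine_walk ! k = x"
      by (auto simp: in_set_conv_nth)
    then have "spine (j + k) = x" "j + k \<le> p - 1"
      using spine_walk j unfolding spine_def by auto
    then show False
      using spine_dist(1)[of "j + k"] assms x_in_V by auto
  qed
  moreover have "walk V E (drop j spine_walk)" "hd (drop j spine_walk) = spine j"
    "last (drop j spine_walk) = b"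
    using walk_drop[OF spine_walk(1) j] j spine_walk(3) unfolding spine_def
    by (simp_all add: hd_drop_conv_nth)
  ultimately have "reach_avoiding x b (spine j)"
    using reach_avoiding_sym unfolding reach_avoiding_def by blast
  then show ?thesis
    using component_closed[OF component b_in_C] by blast
qed

lemma b_not_leaf: "\<not> leaf V E b"
proof
  assume "leaf V E b"
  have "{spine (p - 2), b} \<in> E"
    using spine_edge[of "p - 2"] p_ge_2 spine_last by (simp add: Suc_diff_Suc numeral_2_eq_2)
  moreover have "D x (spine (p - 2)) = p - 2"
    using spine_dist(1)[of "p - 2"] by simp
  then have "spine (p - 2) \<noteq> y"
    using p_def p_ge_2 by auto
  ultimately show False
    using leaf_neighbour_unique[OF \<open>leaf V E b\<close>] edge_b_y by (metis insert_commute)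
qed

lemma branch_leaf:
  assumes "l \<in> L"
  shows "{b, l} \<in> E" "D x l = p"
proof -
  have l: "l \<in> V" "l \<noteq> x"
    using assms C_subset by auto
  obtain u where u: "{u, l} \<in> E" "D x u + 1 = D x l"
    by (rule parent_exists[OF l x_in_V])
  have "u \<noteq> x"
  proof
    assume "u = x"
    obtain xs where xs: "walk V E xs" "hd xs = l" "last xs = b" "x \<notin> set xs"
      using component_reach_avoiding[OF component _ b_in_C] assms unfolding reach_avoiding_def by blast
    then have "xs = [l]"
      using walk_from_leaf_avoiding_neighbour[of l u xs] assms u(1) \<open>u = x\<close> by simp
    then have "b = l"
      using xs(3) by simp
    then show False
      using b_not_leaf assms by simp
  qed
  then have "u \<in> C"
    using component_edge_closed[OF component, of l u] assms u(1) by (simp add: insert_commute)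
  moreover have "broom_vertex V E u"
    using assms u(1) edge_ends[OF u(1)] unfolding broom_vertex_def by blast
  ultimately have "u = b"
    using broom_vertices_eq by blast
  then show "{b, l} \<in> E" "D x l = p"
    using u dist_x_b by auto
qed

lemma spine_leaves_disjoint: "spine ` {1..p-1} \<inter> L = {}"
proof -
  have "spine j \<notin> L" if "j \<in> {1..p-1}" for j
    using branch_leaf(2)[of "spine j"] spine_dist(1)[of j] that by auto
  then show ?thesis
    by blast
qed

lemma childE:
  assumes "v \<in> C" "\<not> leaf V E v"
  obtains c where "c \<in> C" "{v, c} \<in> E" "D x c = D x v + 1"
proof -
  have v: "v \<in> V" "v \<noteq> x"
    using assms C_subset by auto
  obtain u where u: "{u, v} \<in> E" "D x u + 1 = D x v"
    by (rule parent_exists[OF v x_in_V])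
  obtain c where c: "{c, v} \<in> E" "c \<noteq> u"
    by (rule not_leaf_other_neighbourE[OF v(1) assms(2) u(1)])
  have "D x v < D x c"
  proof (rule ccontr)
    assume "\<not> D x v < D x c"
    then have "c = u"
      using parent_unique[OF x_in_V c(1) u(1)] u(2) by simp
    then show False
      using c(2) by simp
  qed
  moreover have "D x c \<le> D x v + 1"
    using gdist_edge_step[of v c x] c(1) x_in_V by (simp add: insert_commute)
  ultimately have "D x c = D x v + 1"
    by simp
  moreover have "c \<noteq> x"
    using calculation x_in_V by auto
  then have "c \<in> C"
    using component_edge_closed[OF component assms(1), of c] c(1) by (simp add: insert_commute)
  ultimately show thesis
    using that c(1) by (simp add: insert_commute)
qed

lemma parent_in_spine:
  assumes "v \<in> V" "v \<noteq> x" "{v, c} \<in> E" "D x c = D x v + 1" "c \<in> spine ` {1..p-1} \<union> L"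
  shows "v \<in> spine ` {1..p-1}"
proof (cases "c \<in> L")
  case True
  then have "v = b"
    using leaf_neighbour_unique[of c v b] branch_leaf(1) assms(3) by (simp add: insert_commute)
  then show ?thesis
    using spine_last p_ge_2 by (intro image_eqI[of _ _ "p - 1"]) auto
next
  case False
  then obtain j where j: "j \<in> {1..p-1}" "c = spine j"
    using assms(5) by blast
  have "D x v \<noteq> 0"
    using gdist_eq_0D[OF x_in_V assms(1)] assms(2) by auto
  then have "2 \<le> j"
    using spine_dist(1)[of j] j assms(4) by simp
  have e: "{spine (j - 1), c} \<in> E"
    using spine_edge[of "j - 1"] j \<open>2 \<le> j\<close> by simp
  have "j - 1 \<le> p - 1"
    using j by auto
  then have "D x (spine (j - 1)) = j - 1"
    by (rule spine_dist(1))
  then have "spine (j - 1) = v"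
    using parent_unique[OF x_in_V e assms(3)] spine_dist(1)[of j] j assms(4) by simp
  then show ?thesis
    using j \<open>2 \<le> j\<close> by (intro image_eqI[of _ _ "j - 1"]) auto
qed

text \<open>Otherwise a vertex of \<open>C\<close> off the spine and not a leaf, chosen farthest from \<open>x\<close>,
  has a child, and the parent of that child lies on the spine.\<close>

lemma branch_eq_spine_leaves: "C = spine ` {1..p-1} \<union> L"
proof
  show "spine ` {1..p-1} \<union> L \<subseteq> C"
    using spine_in_C by auto
  show "C \<subseteq> spine ` {1..p-1} \<union> L"
  proof (rule ccontr)
    define S where "S = C - (spine ` {1..p-1} \<union> L)"
    assume "\<not> C \<subseteq> spine ` {1..p-1} \<union> L"
    moreover have "finite S"
      using finite_C unfolding S_def by simp
    ultimately have "Max (D x ` S) \<in> D x ` S"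
      unfolding S_def by (intro Max_in) auto
    then obtain v where v: "v \<in> S" "D x v = Max (D x ` S)"
      by (metis imageE)
    have "v \<in> C" "\<not> leaf V E v"
      using v(1) unfolding S_def by auto
    then obtain c where c: "c \<in> C" "{v, c} \<in> E" "D x c = D x v + 1"
      by (rule childE)
    have "c \<notin> S"
    proof
      assume "c \<in> S"
      then have "D x c \<le> Max (D x ` S)"
        using \<open>finite S\<close> by simp
      then show False
        using v(2) c(3) by simp
    qed
    then have "v \<in> spine ` {1..p-1}"
      using parent_in_spine[of v c] c \<open>v \<in> C\<close> C_subset unfolding S_def by blast
    then show False
      using v(1) unfolding S_def by blast
  qed
qed

lemma sum_branch: "sum f C = (\<Sum>j\<in>{1..p-1}. f (spine j)) + sum f L"
proof -
  have "sum f C = sum f (spine ` {1..p-1}) + sum f L"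
    using branch_eq_spine_leaves spine_leaves_disjoint finite_C
    by (metis (no_types, lifting) finite_Un sum.union_disjoint)
  then show ?thesis
    using sum.reindex[OF inj_on_spine, of f] by simp
qed

lemma card_branch: "card C = (p - 1) + card L"
  using sum_branch[of "\<lambda>_. 1 :: nat"] by simp

end

section \<open>Moving one branch to the broom vertex of another\<close>

locale branch_pair = tree +
  fixes x T1 T2 y1 y2 b1 b2 p
  assumes branch1: "broom_branch V E x T1 y1 b1 p"
    and branch2: "broom_branch V E x T2 y2 b2 p"
    and T1_ne_T2: "T1 \<noteq> T2"

sublocale branch_pair \<subseteq> B1: broom_branch V E x T1 y1 b1 p
  by (rule branch1)

sublocale branch_pair \<subseteq> B2: broom_branch V E x T2 y2 b2 p
  by (rule branch2)

context branch_pair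
begin

abbreviation "E' \<equiv> move_edges E T2 b1"
abbreviation "D' \<equiv> gdist V E'"

lemma T1_T2_disjoint: "T1 \<inter> T2 = {}"
  using components_disjoint[OF B1.component B2.component T1_ne_T2] .

lemma b1_notin_T2: "b1 \<notin> T2"
  using B1.b_in_C T1_T2_disjoint by blast

lemma T2_subset: "T2 \<subseteq> V"
  using B2.C_subset by blast

lemma edge_into_T2: "{a, c} \<in> E \<Longrightarrow> a \<notin> T2 \<Longrightarrow> c \<in> T2 \<Longrightarrow> a = x"
  using component_edge_closed[OF B2.component, of c a] by (auto simp: insert_commute)

lemma moved_edgeE:
  assumes "e \<in> E'"
  obtains "e \<in> E" "e \<inter> T2 = {}" | v where "v \<in> T2" "e = {b1, v}"
  using assms unfolding move_edges_def by blast

lemma sgraph_moved: "sgraph V E'"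
  unfolding sgraph_def
proof (intro conjI ballI)
  show "finite V"
    by (rule finite_V)
  fix e
  assume "e \<in> E'"
  then show "\<exists>u v. e = {u, v} \<and> u \<noteq> v \<and> u \<in> V \<and> v \<in> V"
  proof (cases rule: moved_edgeE)
    case 1
    then show ?thesis using sgraph unfolding sgraph_def by blast
  next
    case 2
    then show ?thesis using b1_notin_T2 T2_subset B1.b_in_V by blast
  qed
qed

lemma moved_walk_from_x:
  "v \<in> V - T2 \<Longrightarrow> \<exists>xs. walk V E' xs \<and> hd xs = x \<and> last xs = v"
proof (induction "D x v" arbitrary: v)
  case 0
  then have "v = x"
    using gdist_eq_0D[OF B1.x_in_V] by auto
  then show ?case
    using B1.x_in_V by (intro exI[of _ "[x]"]) simp
next
  case (Suc k)
  then have v: "v \<in> V" "v \<noteq> x" "v \<notin> T2"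
    using B1.x_in_V by auto
  obtain u where u: "{u, v} \<in> E" "D x u + 1 = D x v"
    by (rule parent_exists[OF v(1,2) B1.x_in_V])
  have "u \<notin> T2"
    using edge_into_T2[of v u] u(1) v by (auto simp: insert_commute)
  moreover have "u \<in> V"
    using edge_ends[OF u(1)] by simp
  moreover have "k = D x u"
    using Suc.hyps(2) u(2) by simp
  ultimately obtain xs where xs: "walk V E' xs" "hd xs = x" "last xs = u"
    using Suc.hyps(1) by blast
  have "{u, v} \<in> E'"
    unfolding move_edges_def using u(1) \<open>u \<notin> T2\<close> v(3) by blast
  then have "walk V E' (xs @ [v])"
    using walk_append[OF xs(1), of "[v]"] xs(3) v(1) by simp
  then show ?case
    using xs(1,2) by (intro exI[of _ "xs @ [v]"]) (simp add: walk_def)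
qed

lemma connected_moved: "connected_graph V E'"
proof (rule connected_graphI_root[OF B1.x_in_V])
  fix v
  assume v: "v \<in> V"
  show "\<exists>xs. walk V E' xs \<and> hd xs = x \<and> last xs = v"
  proof (cases "v \<in> T2")
    case False
    then show ?thesis using moved_walk_from_x v by blast
  next
    case True
    obtain xs where xs: "walk V E' xs" "hd xs = x" "last xs = b1"
      using moved_walk_from_x[of b1] B1.b_in_V b1_notin_T2 by blast
    have "{b1, v} \<in> E'"
      unfolding move_edges_def using True by blast
    then have "walk V E' (xs @ [v])"
      using walk_append[OF xs(1), of "[v]"] xs(3) v by simp
    then show ?thesis
      using xs(1,2) by (intro exI[of _ "xs @ [v]"]) (simp add: walk_def)
  qed
qed

lemma connected_sgraph_moved: "connected_sgraph V E'"
  using sgraph_moved connected_moved by unfold_locales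

definition collapse :: "'a \<Rightarrow> 'a" where
  "collapse w = (if w \<in> T2 then b1 else w)"

text \<open>Along every edge of the moved tree the potential
  \<open>w \<mapsto> d(v, collapse w) + [w \<in> T2]\<close> increases by at most one.\<close>

lemma moved_dist_lower:
  assumes "v \<in> V - T2" "w \<in> V"
  shows "int (D v (collapse w)) + (if w \<in> T2 then 1 else 0) \<le> int (D' v w)"
proof -
  define \<phi> where "\<phi> w = int (D v (collapse w)) + (if w \<in> T2 then 1 else 0)" for w
  have "\<phi> c \<le> \<phi> a + 1" if e: "{a, c} \<in> E'" for a c
    using e
  proof (cases rule: moved_edgeE)
    case 1
    then have "D v c \<le> D v a + 1"
      using gdist_edge_step assms(1) by blast
    then show ?thesis
      using 1 unfolding \<phi>_def collapse_def by simp
  next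
    case (2 u)
    then have "a = b1 \<and> c = u \<or> a = u \<and> c = b1"
      by (auto simp: doubleton_eq_iff)
    then show ?thesis
      using 2 b1_notin_T2 unfolding \<phi>_def collapse_def by auto
  qed
  then have "\<phi> w - \<phi> v \<le> int (D' v w)"
    using connected_sgraph.potential_le_gdist[OF connected_sgraph_moved] assms by blast
  moreover have "\<phi> v = 0"
    unfolding \<phi>_def collapse_def using assms by simp
  ultimately show ?thesis
    unfolding \<phi>_def by simp
qed

lemma moved_dist_ge_outside: "v \<in> V - T2 \<Longrightarrow> w \<in> V - T2 \<Longrightarrow> D v w \<le> D' v w"
  using moved_dist_lower[of v w] unfolding collapse_def by auto

lemma moved_dist_ge_cross: "v \<in> V - T2 \<Longrightarrow> w \<in> T2 \<Longrightarrow> D v b1 + 1 \<le> D' v w"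
  using moved_dist_lower[of v w] T2_subset unfolding collapse_def by auto

lemma moved_dist_ge_inside:
  assumes "u \<in> T2" "w \<in> T2" "u \<noteq> w"
  shows "2 \<le> D' u w"
proof -
  have "{u, w} \<notin> E'"
  proof
    assume "{u, w} \<in> E'"
    then show False
    proof (cases rule: moved_edgeE)
      case 1
      then show False using assms by auto
    next
      case (2 v)
      then show False using assms b1_notin_T2 by (auto simp: doubleton_eq_iff)
    qed
  qed
  then show ?thesis
    using connected_sgraph.gdist_ge_2[OF connected_sgraph_moved] assms T2_subset by blast
qed

definition q :: nat where "q = p - 1"
definition t1 :: nat where "t1 = card {v \<in> T1. leaf V E v}"
definition t2 :: nat where "t2 = card {v \<in> T2. leaf V E v}"
definition rest :: "'a set" where "rest = V - T2 - T1"

definition loss :: "'a \<Rightarrow> 'a \<Rightarrow> int" where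
  "loss u v = int (D u v) - int (D' u v)"

text \<open>For \<open>u \<notin> T2\<close> and \<open>v \<in> T2\<close>, moving \<open>T2\<close> shortens \<open>d(u, v)\<close> by at most
  \<open>d(x, v) + shift u\<close>.\<close>

definition shift :: "'a \<Rightarrow> int" where
  "shift u = int (D u x) - int (D u b1) - 1"

lemma p_eq_Suc_q: "p = Suc q"
  using B1.p_ge_2 unfolding q_def by simp

lemma q_ge_1: "1 \<le> q"
  using B1.p_ge_2 unfolding q_def by simp

lemma double_sum_q: "2 * (\<Sum>j\<in>{1..q}. int j) = int q * (int q + 1)"
  using double_gauss_sum_from_Suc_0[of q, where 'a = int] by simp

lemma card_T1: "card T1 = q + t1"
  using B1.card_branch unfolding q_def t1_def by simp

lemma card_T2: "card T2 = q + t2"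
  using B2.card_branch unfolding q_def t2_def by simp

lemma outside_T2_split: "V - T2 = rest \<union> T1" "rest \<inter> T1 = {}"
  unfolding rest_def using B1.C_subset T1_T2_disjoint by auto

lemma finite_rest: "finite rest"
  unfolding rest_def using finite_V by simp

lemma card_outside_T2: "card (V - T2) = card rest + (q + t1)"
  using outside_T2_split finite_rest B1.finite_C card_T1 by (simp add: card_Un_disjoint)

lemma dist_b1_x: "D b1 x = q"
  using B1.dist_x_b gdist_commute[OF B1.b_in_V B1.x_in_V] unfolding q_def by auto

lemma shift_rest_le: "u \<in> rest \<Longrightarrow> shift u \<le> - (int q + 1)"
  using component_dist_through_cut[OF B1.component B1.b_in_C, of u] B1.x_in_V
    dist_b1_x gdist_commute[of u x] gdist_commute[of u b1] B1.b_in_V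
  unfolding rest_def shift_def by auto

lemma shift_spine:
  assumes "j \<in> {1..q}"
  shows "shift (B1.spine j) = 2 * int j - 1 - int q"
proof -
  have j: "j \<le> p - 1"
    using assms unfolding q_def by simp
  have "D (B1.spine j) x = j"
    using B1.spine_dist[OF j] gdist_commute[OF _ B1.x_in_V] by metis
  moreover have "int (D (B1.spine j) b1) = int q - int j"
    using B1.spine_dist(2)[OF j] j unfolding q_def by (simp add: of_nat_diff)
  ultimately show ?thesis
    unfolding shift_def by simp
qed

lemma shift_leaf_le: "l \<in> {v \<in> T1. leaf V E v} \<Longrightarrow> shift l \<le> int q - 1"
proof -
  assume l: "l \<in> {v \<in> T1. leaf V E v}"
  then have "l \<in> V" "l \<noteq> b1"
    using B1.C_subset B1.b_not_leaf by auto
  then have "D l x = p" "D l b1 \<noteq> 0"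
    using B1.branch_leaf(2)[OF l] gdist_commute[OF _ B1.x_in_V] gdist_eq_0D[OF _ B1.b_in_V] by auto
  then show ?thesis
    unfolding shift_def using p_eq_Suc_q by simp
qed

lemma sum_shift_le: "(\<Sum>u\<in>V - T2. shift u) \<le> - (int q + 1) * int (card rest) + int t1 * (int q - 1)"
proof -
  have "(\<Sum>u\<in>V - T2. shift u) = (\<Sum>u\<in>rest. shift u) + (\<Sum>u\<in>T1. shift u)"
    using outside_T2_split finite_rest B1.finite_C by (simp add: sum.union_disjoint)
  moreover have "(\<Sum>u\<in>rest. shift u) \<le> int (card rest) * (- (int q + 1))"
    using sum_bounded_above[of rest shift] shift_rest_le by simp
  moreover have "(\<Sum>j\<in>{1..q}. shift (B1.spine j)) = 0"
  proof -
    have "(\<Sum>j\<in>{1..q}. shift (B1.spine j)) = (\<Sum>j\<in>{1..q}. 2 * int j - (1 + int q))"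
      using shift_spine by (intro sum.cong) auto
    also have "\<dots> = 2 * (\<Sum>j\<in>{1..q}. int j) - int q * (1 + int q)"
      by (simp add: sum_subtractf sum_distrib_left)
    finally show ?thesis
      using double_sum_q by simp
  qed
  moreover have "(\<Sum>u\<in>{v \<in> T1. leaf V E v}. shift u) \<le> int t1 * (int q - 1)"
    using sum_bounded_above[of "{v \<in> T1. leaf V E v}" shift] shift_leaf_le unfolding t1_def by simp
  ultimately show ?thesis
    using B1.sum_branch[of shift] unfolding q_def[symmetric] by (simp add: algebra_simps)
qed

lemma sum_dist_x_T2: "(\<Sum>v\<in>T2. int (D x v)) = (\<Sum>j\<in>{1..q}. int j) + int t2 * (int q + 1)"
proof -
  have "(\<Sum>j\<in>{1..q}. int (D x (B2.spine j))) = (\<Sum>j\<in>{1..q}. int j)"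
    using B2.spine_dist(1) unfolding q_def by (intro sum.cong) auto
  moreover have "(\<Sum>v\<in>{v \<in> T2. leaf V E v}. int (D x v)) = (\<Sum>v\<in>{v \<in> T2. leaf V E v}. int q + 1)"
    using B2.branch_leaf(2) p_eq_Suc_q by (intro sum.cong) auto
  ultimately show ?thesis
    using B2.sum_branch[of "\<lambda>v. int (D x v)"] unfolding q_def[symmetric] t2_def by simp
qed

lemma sum_dist_b2_T2_le: "(\<Sum>v\<in>T2. int (D v b2)) \<le> int q * int q - (\<Sum>j\<in>{1..q}. int j) + int t2"
proof -
  have "(\<Sum>j\<in>{1..q}. int (D (B2.spine j) b2)) = (\<Sum>j\<in>{1..q}. int q - int j)"
    using B2.spine_dist(2) unfolding q_def by (intro sum.cong) (auto simp: of_nat_diff)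
  moreover have "(\<Sum>v\<in>{v \<in> T2. leaf V E v}. int (D v b2)) \<le> int t2"
  proof -
    have "D v b2 \<le> 1" if "v \<in> {v \<in> T2. leaf V E v}" for v
      using gdist_edge_le_1 B2.branch_leaf(1)[OF that] by (simp add: insert_commute)
    then show ?thesis
      using sum_bounded_above[of "{v \<in> T2. leaf V E v}" "\<lambda>v. int (D v b2)" 1]
      unfolding t2_def by force
  qed
  ultimately show ?thesis
    using B2.sum_branch[of "\<lambda>v. int (D v b2)"] unfolding q_def[symmetric]
    by (simp add: sum_subtractf)
qed

lemma loss_commute: "u \<in> V \<Longrightarrow> v \<in> V \<Longrightarrow> loss u v = loss v u"
  unfolding loss_def using gdist_commute connected_sgraph.gdist_commute[OF connected_sgraph_moved]
  by simp

lemma loss_self: "u \<in> V \<Longrightarrow> loss u u = 0"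
  unfolding loss_def using connected_sgraph.gdist_self[OF connected_sgraph_moved] by simp

lemma loss_outside_le: "(\<Sum>u\<in>V - T2. \<Sum>v\<in>V - T2. loss u v) \<le> 0"
  by (intro sum_nonpos) (simp add: loss_def moved_dist_ge_outside)

lemma loss_cross_le:
  "(\<Sum>u\<in>V - T2. \<Sum>v\<in>T2. loss u v) \<le>
     int (card (V - T2)) * ((\<Sum>j\<in>{1..q}. int j) + int t2 * (int q + 1))
     + int (q + t2) * (- (int q + 1) * int (card rest) + int t1 * (int q - 1))"
proof -
  have "loss u v \<le> int (D x v) + shift u" if u: "u \<in> V - T2" and v: "v \<in> T2" for u v
    using gdist_triangle[of u x v] moved_dist_ge_cross[OF u v] u v T2_subset B1.x_in_V
    unfolding loss_def shift_def by force
  then have "(\<Sum>u\<in>V - T2. \<Sum>v\<in>T2. loss u v) \<le> (\<Sum>u\<in>V - T2. \<Sum>v\<in>T2. int (D x v) + shift u)"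
    by (intro sum_mono) auto
  also have "\<dots> = int (card (V - T2)) * (\<Sum>v\<in>T2. int (D x v)) + int (card T2) * (\<Sum>u\<in>V - T2. shift u)"
    by (simp add: sum.distrib sum_distrib_left)
  also have "\<dots> \<le> int (card (V - T2)) * (\<Sum>v\<in>T2. int (D x v))
      + int (card T2) * (- (int q + 1) * int (card rest) + int t1 * (int q - 1))"
    using sum_shift_le by (intro add_left_mono mult_left_mono) auto
  finally show ?thesis
    using sum_dist_x_T2 card_T2 by simp
qed

lemma row_loss_inside_le:
  assumes "u \<in> T2"
  shows "(\<Sum>v\<in>T2. loss u v) \<le> (int (card T2) - 2) * int (D u b2)
    - 2 * (int (card T2) - 1) + (\<Sum>v\<in>T2. int (D v b2))"
proof -
  let ?d = "\<lambda>v. int (D v b2)"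
  have fin: "finite T2"
    using B2.finite_C .
  have "loss u u = 0"
    using loss_self assms T2_subset by blast
  then have "(\<Sum>v\<in>T2. loss u v) = (\<Sum>v\<in>T2 - {u}. loss u v)"
    using sum.remove[OF fin assms, of "loss u"] by simp
  also have "\<dots> \<le> (\<Sum>v\<in>T2 - {u}. ?d v + (?d u - 2))"
  proof (intro sum_mono)
    fix v
    assume "v \<in> T2 - {u}"
    then show "loss u v \<le> ?d v + (?d u - 2)"
      using gdist_triangle[of u b2 v] gdist_commute[of b2 v] moved_dist_ge_inside[of u v]
        assms B2.b_in_V T2_subset unfolding loss_def by force
  qed
  also have "\<dots> = ((\<Sum>v\<in>T2. ?d v) - ?d u) + (int (card T2) - 1) * (?d u - 2)"
  proof -
    have "1 \<le> card T2"
      using assms fin by (metis One_nat_def Suc_leI card_gt_0_iff empty_iff)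
    then show ?thesis
      using sum.remove[OF fin assms, of ?d] fin assms by (simp add: sum.distrib of_nat_diff)
  qed
  finally show ?thesis
    by (simp add: algebra_simps)
qed

lemma loss_inside_le:
  "(\<Sum>u\<in>T2. \<Sum>v\<in>T2. loss u v) \<le>
     2 * (int (q + t2) - 1) * (int q * int q - (\<Sum>j\<in>{1..q}. int j) + int t2)
     - 2 * int (q + t2) * (int (q + t2) - 1)"
proof -
  let ?d = "\<lambda>v. int (D v b2)"
  let ?S = "\<Sum>v\<in>T2. ?d v"
  let ?m = "int (card T2)"
  have "(\<Sum>u\<in>T2. \<Sum>v\<in>T2. loss u v) \<le> (\<Sum>u\<in>T2. (?m - 2) * ?d u + (?S - 2 * (?m - 1)))"
    using row_loss_inside_le by (intro sum_mono) (simp add: algebra_simps)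
  also have "\<dots> = (?m - 2) * ?S + ?m * (?S - 2 * (?m - 1))"
    by (simp add: sum.distrib sum_distrib_left)
  also have "\<dots> = 2 * (?m - 1) * ?S - 2 * ?m * (?m - 1)"
    by (simp add: algebra_simps)
  also have "\<dots> \<le> 2 * (?m - 1) * (int q * int q - (\<Sum>j\<in>{1..q}. int j) + int t2) - 2 * ?m * (?m - 1)"
    using sum_dist_b2_T2_le card_T2 q_ge_1 by (intro diff_right_mono mult_left_mono) auto
  finally show ?thesis
    using card_T2 by simp
qed

lemma card_V_split: "card V = card (V - T2) + card T2"
  using card_Diff_subset[OF B2.finite_C T2_subset] card_mono[OF finite_V T2_subset] by simp

lemma sum_loss_split:
  "(\<Sum>u\<in>V. \<Sum>v\<in>V. loss u v) =
     (\<Sum>u\<in>V - T2. \<Sum>v\<in>V - T2. loss u v) + 2 * (\<Sum>u\<in>V - T2. \<Sum>v\<in>T2. loss u v)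
     + (\<Sum>u\<in>T2. \<Sum>v\<in>T2. loss u v)"
proof -
  have split: "sum g V = sum g (V - T2) + sum g T2" for g :: "'a \<Rightarrow> int"
    using sum.subset_diff[OF T2_subset finite_V] by simp
  have "(\<Sum>u\<in>T2. \<Sum>v\<in>V - T2. loss u v) = (\<Sum>v\<in>V - T2. \<Sum>u\<in>T2. loss u v)"
    by (rule sum.swap)
  also have "\<dots> = (\<Sum>u\<in>V - T2. \<Sum>v\<in>T2. loss u v)"
    using loss_commute T2_subset by (intro sum.cong refl) auto
  finally have swap: "(\<Sum>u\<in>T2. \<Sum>v\<in>V - T2. loss u v) = (\<Sum>u\<in>V - T2. \<Sum>v\<in>T2. loss u v)" .
  have "(\<Sum>u\<in>V. \<Sum>v\<in>V. loss u v) = (\<Sum>u\<in>V. (\<Sum>v\<in>V - T2. loss u v) + (\<Sum>v\<in>T2. loss u v))"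
    using split by simp
  also have "\<dots> = (\<Sum>u\<in>V - T2. \<Sum>v\<in>V - T2. loss u v) + (\<Sum>u\<in>V - T2. \<Sum>v\<in>T2. loss u v)
      + ((\<Sum>u\<in>T2. \<Sum>v\<in>V - T2. loss u v) + (\<Sum>u\<in>T2. \<Sum>v\<in>T2. loss u v))"
    using split by (simp add: sum.distrib)
  finally show ?thesis
    using swap by simp
qed

lemma sum_loss_le:
  "(\<Sum>u\<in>V. \<Sum>v\<in>V. loss u v) \<le> 4 * int q ^ 2 * (int q - 1)
     - int q * (int q + 1) * (int (card V) - (2 * int t1 * int t2 + 2 * int t1 + 2 * int t2 + 3))
     - 2 * int q * (int q - 1) * (int t1 * int t2 - int t1 - int t2)"
proof -
  define g where "g = (\<Sum>j\<in>{1..q}. int j)"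
  have "(\<Sum>u\<in>V. \<Sum>v\<in>V. loss u v) \<le> 0
     + 2 * (int (card (V - T2)) * (g + int t2 * (int q + 1))
        + int (q + t2) * (- (int q + 1) * int (card rest) + int t1 * (int q - 1)))
     + (2 * (int (q + t2) - 1) * (int q * int q - g + int t2) - 2 * int (q + t2) * (int (q + t2) - 1))"
    unfolding sum_loss_split g_def
    by (intro add_mono mult_left_mono loss_outside_le loss_cross_le loss_inside_le) simp_all
  also have "\<dots> = 4 * int q ^ 2 * (int q - 1)
     - int q * (int q + 1) * (int (card V) - (2 * int t1 * int t2 + 2 * int t1 + 2 * int t2 + 3))
     - 2 * int q * (int q - 1) * (int t1 * int t2 - int t1 - int t2)"
  proof -
    have "2 * g = int q * (int q + 1)"
      using double_sum_q unfolding g_def .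
    moreover have "int (card (V - T2)) = int (card rest) + int q + int t1"
      using card_outside_T2 by simp
    moreover have "int (card V) = int (card rest) + int q + int t1 + (int q + int t2)"
      using card_V_split card_outside_T2 card_T2 by simp
    moreover have "int (q + t2) = int q + int t2"
      by simp
    ultimately show ?thesis
      by algebra
  qed
  finally show ?thesis .
qed

end

section \<open>Arithmetic\<close>

text \<open>Both \<open>s + t + 2\<close> and \<open>(q + 4) / 2\<close> are below \<open>\<surd>(2n)\<close>,
  and \<open>12 \<surd>(2n) \<le> n\<close> once \<open>n \<ge> 288\<close>.\<close>

lemma linear_slack_ge:
  fixes n q s t :: int
  assumes "2 * s * t + 2 * s + 2 * t + 4 \<le> n" "s = t \<or> s = t + 1"
    and "(q + 4)^2 \<le> 8 * (n - 1)" "1636 \<le> n"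
  shows "4 * q \<le> n - 4 * (s + t) - 3"
proof -
  define r where "r = sqrt (real_of_int (2 * n))"
  have r_sq: "r * r = real_of_int (2 * n)"
    unfolding r_def using assms(4) by simp
  have "(s + t)^2 \<le> 4 * s * t + 1"
    using assms(2) by (auto simp: power2_eq_square algebra_simps)
  then have "(s + t + 2)^2 < 2 * n"
    using assms(1) by (simp add: power2_eq_square algebra_simps)
  then have "(real_of_int (s + t + 2))^2 < real_of_int (2 * n)"
    by (metis of_int_less_iff of_int_power)
  then have "real_of_int (s + t + 2) < r"
    unfolding r_def by (rule real_less_rsqrt)
  moreover have "real_of_int (q + 4) / 2 < r"
  proof -
    have "(q + 4)^2 < 4 * (2 * n)"
      using assms(3) by simp
    then have "(real_of_int (q + 4))^2 < 4 * real_of_int (2 * n)"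
      by (metis of_int_less_iff of_int_power of_int_mult of_int_numeral)
    then have "(real_of_int (q + 4) / 2)^2 < real_of_int (2 * n)"
      by (simp add: power_divide)
    then show ?thesis
      unfolding r_def by (rule real_less_rsqrt)
  qed
  moreover have "24 \<le> r"
    unfolding r_def using assms(4) by (intro real_le_rsqrt) simp
  then have "24 * r \<le> r * r"
    by (intro mult_right_mono) auto
  ultimately have "real_of_int (4 * (s + t) + 4 * q + 3) < real_of_int n"
    using r_sq by simp
  then show ?thesis
    by simp
qed

lemma order_le_if_loss_bound:
  fixes n q s t :: int
  assumes loss: "-1 \<le> 4 * q ^ 2 * (q - 1)
      - q * (q + 1) * (n - (2 * s * t + 2 * s + 2 * t + 3)) - 2 * q * (q - 1) * (s * t - s - t)"
    and "1 \<le> q" "(q + 4)^2 \<le> 8 * (n - 1)" "1636 \<le> n" "s = t \<or> s = t + 1"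
  shows "n \<le> 2 * s * t + 2 * s + 2 * t + 3"
proof (rule ccontr)
  define X where "X = n - (2 * s * t + 2 * s + 2 * t + 3)"
  define Y where "Y = s * t - s - t"
  assume "\<not> n \<le> 2 * s * t + 2 * s + 2 * t + 3"
  then have "1 \<le> X"
    unfolding X_def by simp
  show False
  proof (cases "q = 1")
    case True
    then show ?thesis
      using loss \<open>1 \<le> X\<close> unfolding X_def by simp
  next
    case False
    then have "2 \<le> q"
      using assms(2) by simp
    have "4 * q \<le> X + 2 * Y"
      using linear_slack_ge[of s t n q] \<open>1 \<le> X\<close> assms(3-5) unfolding X_def Y_def
      by (simp add: algebra_simps)
    then have "(q - 1) * (4 * q) \<le> (q - 1) * (X + 2 * Y)"
      using \<open>2 \<le> q\<close> by (intro mult_left_mono) auto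
    then have "2 \<le> (q + 1) * X + 2 * (q - 1) * Y - 4 * q * (q - 1)"
      using \<open>1 \<le> X\<close> by (simp add: algebra_simps)
    then have "q * 2 \<le> q * ((q + 1) * X + 2 * (q - 1) * Y - 4 * q * (q - 1))"
      using \<open>2 \<le> q\<close> by (intro mult_left_mono) auto
    then show ?thesis
      using loss \<open>2 \<le> q\<close> unfolding X_def[symmetric] Y_def[symmetric]
      by (simp add: algebra_simps power2_eq_square)
  qed
qed

context branch_pair
begin

lemma card_le_if_wiener_le:
  assumes "wiener V E' \<le> wiener V E" "(int p + 3)^2 \<le> 8 * (int (card V) - 1)"
    and "1636 \<le> card V" "t1 = t2 \<or> t1 = t2 + 1"
  shows "card V \<le> 2 * t1 * t2 + 2 * t1 + 2 * t2 + 3"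
proof -
  have "(\<Sum>u\<in>V. \<Sum>v\<in>V. D' u v) \<le> (\<Sum>u\<in>V. \<Sum>v\<in>V. D u v) + 1"
    using assms(1) unfolding wiener_def by linarith
  then have "-1 \<le> int (\<Sum>u\<in>V. \<Sum>v\<in>V. D u v) - int (\<Sum>u\<in>V. \<Sum>v\<in>V. D' u v)"
    by linarith
  then have "-1 \<le> (\<Sum>u\<in>V. \<Sum>v\<in>V. loss u v)"
    unfolding loss_def by (simp add: sum_subtractf)
  moreover have "1 \<le> int q"
    using q_ge_1 by simp
  moreover have "int p + 3 = int q + 4"
    using p_eq_Suc_q by simp
  then have "(int q + 4)^2 \<le> 8 * (int (card V) - 1)"
    using assms(2) by metis
  moreover have "1636 \<le> int (card V)"
    using assms(3) by simp
  moreover have "int t1 = int t2 \<or> int t1 = int t2 + 1"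
    using assms(4) by auto
  ultimately have "int (card V) \<le> 2 * int t1 * int t2 + 2 * int t1 + 2 * int t2 + 3"
    by (rule order_le_if_loss_bound[OF order_trans[OF _ sum_loss_le]])
  then have "int (card V) \<le> int (2 * t1 * t2 + 2 * t1 + 2 * t2 + 3)"
    by simp
  then show ?thesis
    by (simp only: of_nat_le_iff)
qed

end

lemma square_bound_if_le_sqrt:
  fixes n p :: nat
  assumes "1 \<le> n" "real p \<le> 4 * sqrt ((real n - 1) / 2) - 3"
  shows "(int p + 3)^2 \<le> 8 * (int n - 1)"
proof -
  have "(real p + 3)^2 \<le> (4 * sqrt ((real n - 1) / 2))^2"
    using assms(2) by (intro power_mono) auto
  also have "\<dots> = 8 * (real n - 1)"
    using assms(1) by (simp add: power_mult_distrib)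
  finally have "real_of_int ((int p + 3)^2) \<le> real_of_int (8 * (int n - 1))"
    using assms(1) by simp
  then show ?thesis
    by (simp only: of_int_le_iff)
qed

lemma ceiling_sqrt_le_if_order_le:
  fixes n t :: nat
  assumes "n \<le> 2 * t * t + 4 * t + 3"
  shows "\<lceil>sqrt ((real n - 1) / 2)\<rceil> - 1 \<le> int t"
proof -
  have "real n \<le> real (2 * t * t + 4 * t + 3)"
    using assms by (simp only: of_nat_le_iff)
  then have "(real n - 1) / 2 \<le> (real t + 1)^2"
    by (simp add: power2_eq_square algebra_simps)
  then have "sqrt ((real n - 1) / 2) \<le> real t + 1"
    by (intro real_le_lsqrt) auto
  then have "\<lceil>sqrt ((real n - 1) / 2)\<rceil> \<le> int t + 1"
    by (simp add: ceiling_le_iff)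
  then show ?thesis
    by simp
qed

lemma ceiling_sqrt_half_le_if_order_le:
  fixes n t :: nat
  assumes "n \<le> 2 * t * t + 2 * t + 1"
  shows "\<lceil>sqrt ((real n - 1/2) / 2) - 1/2\<rceil> \<le> int t"
proof -
  have "real n \<le> real (2 * t * t + 2 * t + 1)"
    using assms by (simp only: of_nat_le_iff)
  then have "(real n - 1/2) / 2 \<le> (real t + 1/2)^2"
    by (simp add: power2_eq_square algebra_simps)
  then have "sqrt ((real n - 1/2) / 2) \<le> real t + 1/2"
    by (intro real_le_lsqrt) auto
  then show ?thesis
    by (simp add: ceiling_le_iff)
qed

theorem mainTheorem9:
  fixes V :: "'a set" and E :: "'a set set" and x y1 y2 y1' :: 'a and T1 T2 :: "'a set"
    and n d p t1 t2 :: nat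
  assumes "max_wiener_tree V E"
    and "n = card V" and "d = diameter V E"
    and "special_vertex V E x"
    and "special_pair V E x T1 T2"
    and "y1 \<in> T1" and "leaf V E y1" and "y2 \<in> T2" and "leaf V E y2"
    and "broom_vertex V E y1'" and "{y1', y1} \<in> E"
    and "p = gdist V E x y1" and "p = gdist V E x y2"
    and "t1 = card {v \<in> T1. leaf V E v}" and "t2 = card {v \<in> T2. leaf V E v}"
    and "n \<ge> 1636"
    and "real p \<le> 4 * sqrt ((real n - 1) / 2) - 3"
    and "wiener V E \<ge> wiener V (move_edges E T2 y1')"
  shows "(t1 = t2 \<longrightarrow> int t1 \<ge> \<lceil>sqrt ((real n - 1) / 2)\<rceil> - 1) \<and>
         (t1 = t2 + 1 \<longrightarrow> int t1 \<ge> \<lceil>sqrt ((real n - 1/2) / 2) - 1/2\<rceil>)"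
proof -
  interpret tree V E
    using assms(1) unfolding max_wiener_tree_def is_tree_def by unfold_locales auto
  obtain b2 where "{u \<in> V. {u, y2} \<in> E} = {b2}"
    using leaf_neighbourE[OF assms(9)] .
  then have "{b2, y2} \<in> E"
    by auto
  moreover have "x \<in> V" "\<not> leaf V E x"
    using assms(4) unfolding special_vertex_def leaf_def by auto
  ultimately interpret branch_pair V E x T1 T2 y1 y2 y1' b2 p
    using assms(5-13) unfolding branch_pair_def branch_pair_axioms_def broom_branch_def
      broom_branch_axioms_def special_pair_def by (simp add: tree_axioms)
  have "(int p + 3)^2 \<le> 8 * (int n - 1)"
    using square_bound_if_le_sqrt assms(16,17) by simp
  then have "t1 = t2 \<or> t1 = t2 + 1 \<Longrightarrow> n \<le> 2 * t1 * t2 + 2 * t1 + 2 * t2 + 3"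
    using card_le_if_wiener_le assms(2,14-16,18) unfolding t1_def t2_def by simp
  then show ?thesis
    using ceiling_sqrt_le_if_order_le[of n t1] ceiling_sqrt_half_le_if_order_le[of n t1]
    by (auto simp: algebra_simps)
qed

end
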